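(* Let $n\geq 3$, let $\Omega\subset\mathbb{R}^n$ be a bounded simple rotationally symmetric domain along the $x_n$ axis, and let $f\in C^1(\mathbb{R})$ be convex. Let $u$ be a stable solution of $$-\Delta u=f(u)\ \text{in}\ \Omega,\qquad u=0\ \text{on}\ \partial\Omega.$$ Then $u$ is symmetric with respect to the hyperplane $x_n=0$, i.e. $u(x_1,\dots,x_{n-1},-x_n)=u(x_1,\dots,x_{n-1},x_n)$.
   Context: A domain $\Omega\subset\mathbb{R}^n$ is simple rotationally symmetric along the $x_n$ axis if (1) it is symmetric with respect to $x_n=0$; (2) it is invariant under every $A\in O(n)$ fixing the $x_n$ axis; (3) for each $i=1,\dots,n$, any segment joining two points of $\Omega$ and parallel to the $x_i$ axis lies in $\Omega$. A solution $u$ is stable if $\int_\Omega|\nabla\phi|^2dx-\int_\Omega f'(u)\phi^2dx>0$ for every nonzero $\phi\in H^1_0(\Omega)$; equivalently, the first Dirichlet eigenvalue of $-\Delta-f'(u)$ in $\Omega$ is positive. *)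

theory Defs
  imports "HOL-Analysis.Analysis"
begin

definition partial :: "'n::finite \<Rightarrow> (real^'n \<Rightarrow> real) \<Rightarrow> real^'n \<Rightarrow> real" where
  "partial i u x = frechet_derivative u (at x) (axis i 1)"

definition C2_on :: "(real^'n::finite) set \<Rightarrow> (real^'n \<Rightarrow> real) \<Rightarrow> bool" where
  "C2_on \<Omega> u \<longleftrightarrow> (\<forall>x\<in>\<Omega>. u differentiable (at x))
     \<and> (\<forall>i. \<forall>x\<in>\<Omega>. partial i u differentiable (at x))
     \<and> (\<forall>i. continuous_on \<Omega> (partial i u))
     \<and> (\<forall>i j. continuous_on \<Omega> (partial j (partial i u)))"

definition laplacian :: "(real^'n::finite \<Rightarrow> real) \<Rightarrow> real^'n \<Rightarrow> real" where
  "laplacian u x = (\<Sum>i\<in>UNIV. partial i (partial i u) x)"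

definition reflect :: "'n::finite \<Rightarrow> real^'n \<Rightarrow> real^'n" where
  "reflect k x = (\<chi> i. if i = k then - (x $ i) else x $ i)"

definition simple_rot_sym :: "'n::finite \<Rightarrow> (real^'n) set \<Rightarrow> bool" where
  "simple_rot_sym k \<Omega> \<longleftrightarrow>
     (\<forall>x\<in>\<Omega>. reflect k x \<in> \<Omega>)
   \<and> (\<forall>A::real^'n^'n. orthogonal_matrix A \<and> A *v axis k 1 = axis k 1 \<longrightarrow> (\<forall>x\<in>\<Omega>. A *v x \<in> \<Omega>))
   \<and> (\<forall>i. \<forall>x\<in>\<Omega>. \<forall>y\<in>\<Omega>. (\<forall>j. j \<noteq> i \<longrightarrow> x $ j = y $ j) \<longrightarrow> closed_segment x y \<subseteq> \<Omega>)"

text \<open>Test functions: C^1 functions on R^n with compact support contained in Omega (dense in H^1_0).\<close>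
definition test_fun :: "(real^'n::finite) set \<Rightarrow> (real^'n \<Rightarrow> real) \<Rightarrow> bool" where
  "test_fun \<Omega> \<phi> \<longleftrightarrow> (\<forall>x. \<phi> differentiable (at x))
     \<and> (\<forall>i. continuous_on UNIV (partial i \<phi>))
     \<and> compact (closure {x. \<phi> x \<noteq> 0}) \<and> closure {x. \<phi> x \<noteq> 0} \<subseteq> \<Omega>"

definition rayleigh :: "(real^'n::finite) set \<Rightarrow> (real^'n \<Rightarrow> real) \<Rightarrow> (real^'n \<Rightarrow> real) \<Rightarrow> real" where
  "rayleigh \<Omega> V \<phi> =
     (integral \<Omega> (\<lambda>x. \<Sum>i\<in>UNIV. (partial i \<phi> x)^2) - integral \<Omega> (\<lambda>x. V x * (\<phi> x)^2))
     / integral \<Omega> (\<lambda>x. (\<phi> x)^2)"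

definition first_dirichlet_eigenvalue :: "(real^'n::finite) set \<Rightarrow> (real^'n \<Rightarrow> real) \<Rightarrow> real" where
  "first_dirichlet_eigenvalue \<Omega> V = Inf {rayleigh \<Omega> V \<phi> | \<phi>. test_fun \<Omega> \<phi> \<and> (\<exists>x. \<phi> x \<noteq> 0)}"

definition stable :: "(real^'n::finite) set \<Rightarrow> (real \<Rightarrow> real) \<Rightarrow> (real^'n \<Rightarrow> real) \<Rightarrow> bool" where
  "stable \<Omega> f' u \<longleftrightarrow> first_dirichlet_eigenvalue \<Omega> (\<lambda>x. f' (u x)) > 0"

end

theory Submission
  imports Defs
begin

text \<open>Let \<open>R\<close> be the reflection in the hyperplane \<open>x\<^sub>k = 0\<close> and \<open>v = u - u \<circ> R\<close>.
  Since \<open>\<Omega>\<close> is invariant under \<open>R\<close>, \<open>v\<close> is \<open>C\<^sup>2\<close> in \<open>\<Omega>\<close> and vanishes on \<open>\<partial>\<Omega>\<close>, and the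
  convexity of \<open>f\<close> turns \<open>-\<Delta>v = f(u) - f(u \<circ> R)\<close> into the linear inequality
  \<open>-\<Delta>v \<le> f'(u) v\<close>. Such a \<open>v\<close> cannot be positive anywhere when \<open>-\<Delta> - f'(u)\<close> has positive
  first Dirichlet eigenvalue: for a \<open>C\<^sup>1\<close> ramp \<open>g\<^sub>e\<close> vanishing on \<open>(-\<infinity>, e]\<close> and the weight
  \<open>G\<^sub>e\<close> with \<open>G\<^sub>e' = (g\<^sub>e')\<^sup>2\<close>, integration by parts gives
  \<open>\<integral>|\<nabla>g\<^sub>e(v)|\<^sup>2 = \<integral>G\<^sub>e(v)(-\<Delta>v) \<le> \<integral>f'(u) v G\<^sub>e(v)\<close>, and \<open>0 \<le> t G\<^sub>e(t) - g\<^sub>e(t)\<^sup>2 \<le> e(e + 2|t|)\<close>,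
  so the Rayleigh quotient of \<open>g\<^sub>e(v)\<close> is \<open>O(e)\<close> while \<open>\<integral>g\<^sub>e(v)\<^sup>2\<close> stays bounded below.
  Hence \<open>u \<le> u \<circ> R\<close>, and equality follows by applying this at \<open>R x\<close>.\<close>

section \<open>Piecewise polynomial ramps\<close>

lemma has_real_derivative_if_le:
  fixes f g f' g' :: "real \<Rightarrow> real"
  assumes "\<And>x. (f has_real_derivative f' x) (at x)" "\<And>x. (g has_real_derivative g' x) (at x)"
    and "f a = g a" "f' a = g' a"
  shows "((\<lambda>x. if x \<le> a then f x else g x) has_real_derivative (if x \<le> a then f' x else g' x)) (at x)"
proof -
  have "((\<lambda>x. if x \<in> {..a} then f x else g x) has_derivative
      (if x \<in> {..a} then (\<lambda>h. f' x * h) else (\<lambda>h. g' x * h))) (at x within ({..a} \<union> {a<..}))"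
    by (rule has_derivative_If_within_closures)
      (use assms in \<open>auto intro: has_derivative_at_withinI simp: has_field_derivative_def\<close>)
  moreover have "{..a} \<union> {a<..} = (UNIV::real set)" by auto
  ultimately show ?thesis
    by (auto simp: has_field_derivative_def split: if_splits)
qed

text \<open>\<open>ramp_weight e\<close> is the primitive of \<open>(ramp_slope e)\<^sup>2\<close>, chosen so that
  \<open>div (ramp_weight e (w) \<nabla>w) = |\<nabla>(ramp e (w))|\<^sup>2 + ramp_weight e (w) \<Delta>w\<close>.\<close>

definition ramp :: "real \<Rightarrow> real \<Rightarrow> real" where
  "ramp e t = (if t \<le> e then 0 else if t \<le> 2*e then (t - e)^2 / (2*e) else t - 3*e/2)"

definition ramp_slope :: "real \<Rightarrow> real \<Rightarrow> real" where
  "ramp_slope e t = (if t \<le> e then 0 else if t \<le> 2*e then (t - e) / e else 1)"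

definition ramp_weight :: "real \<Rightarrow> real \<Rightarrow> real" where
  "ramp_weight e t = (if t \<le> e then 0 else if t \<le> 2*e then (t - e)^3 / (3*e^2) else t - 5*e/3)"

lemma ramp_has_real_derivative:
  assumes "e > 0" shows "(ramp e has_real_derivative ramp_slope e t) (at t)"
proof -
  have "((\<lambda>t. if t \<le> 2*e then (t - e)^2 / (2*e) else t - 3*e/2) has_real_derivative
      (if t \<le> 2*e then (t - e) / e else 1)) (at t)" for t
    by (rule has_real_derivative_if_le)
      (use assms in \<open>auto intro!: derivative_eq_intros simp: field_simps power2_eq_square\<close>)
  then have "((\<lambda>t. if t \<le> e then 0 else if t \<le> 2*e then (t - e)^2 / (2*e) else t - 3*e/2)
      has_real_derivative (if t \<le> e then 0 else if t \<le> 2*e then (t - e) / e else 1)) (at t)"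
    by (intro has_real_derivative_if_le[where f'="\<lambda>_. 0"]) (use assms in auto)
  then show ?thesis
    unfolding ramp_def[abs_def] ramp_slope_def .
qed

lemma ramp_weight_has_real_derivative:
  assumes "e > 0" shows "(ramp_weight e has_real_derivative (ramp_slope e t)^2) (at t)"
proof -
  have "((\<lambda>t. if t \<le> 2*e then (t - e)^3 / (3*e^2) else t - 5*e/3) has_real_derivative
      (if t \<le> 2*e then (t - e)^2 / e^2 else 1)) (at t)" for t
    by (rule has_real_derivative_if_le)
      (use assms in \<open>auto intro!: derivative_eq_intros
         simp: field_simps power2_eq_square power3_eq_cube\<close>)
  then have "((\<lambda>t. if t \<le> e then 0 else if t \<le> 2*e then (t - e)^3 / (3*e^2) else t - 5*e/3)
      has_real_derivative (if t \<le> e then 0 else if t \<le> 2*e then (t - e)^2 / e^2 else 1)) (at t)"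
    by (intro has_real_derivative_if_le[where f'="\<lambda>_. 0"]) (use assms in auto)
  moreover have "(ramp_slope e t)^2 = (if t \<le> e then 0 else if t \<le> 2*e then (t - e)^2 / e^2 else 1)"
    by (simp add: ramp_slope_def power_divide)
  ultimately show ?thesis
    unfolding ramp_weight_def[abs_def] by simp
qed

lemma continuous_on_ramp: "e > 0 \<Longrightarrow> continuous_on A (ramp e)"
  by (meson DERIV_isCont continuous_at_imp_continuous_on ramp_has_real_derivative)

lemma continuous_on_ramp_weight: "e > 0 \<Longrightarrow> continuous_on A (ramp_weight e)"
  by (meson DERIV_isCont continuous_at_imp_continuous_on ramp_weight_has_real_derivative)

lemma continuous_on_ramp_slope:
  assumes "e > 0" shows "continuous_on A (ramp_slope e)"
proof -
  have "ramp_slope e = (\<lambda>t. max 0 (min 1 ((t - e) / e)))"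
    using assms by (auto simp: ramp_slope_def fun_eq_iff field_simps)
  then show ?thesis
    using assms by (auto intro!: continuous_intros)
qed

lemma ramp_eq_0: "t \<le> e \<Longrightarrow> ramp e t = 0"
  and ramp_slope_eq_0: "t \<le> e \<Longrightarrow> ramp_slope e t = 0"
  and ramp_weight_eq_0: "t \<le> e \<Longrightarrow> ramp_weight e t = 0"
  by (simp_all add: ramp_def ramp_slope_def ramp_weight_def)

lemma ramp_weight_nonneg: "e > 0 \<Longrightarrow> ramp_weight e t \<ge> 0"
  by (auto simp: ramp_weight_def)

lemma ramp_ge:
  assumes "e > 0" shows "max 0 (t - 2*e) \<le> ramp e t"
proof -
  have nonneg: "0 \<le> (t - e)^2 / (2*e)" using assms by simp
  then have "t \<le> 2*e \<Longrightarrow> t - 2*e \<le> (t - e)^2 / (2*e)" by linarith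
  with nonneg show ?thesis using assms unfolding ramp_def by auto
qed

lemma ramp_weight_defect_bounds:
  assumes "e > 0"
  shows "0 \<le> t * ramp_weight e t - (ramp e t)^2"
    and "t * ramp_weight e t - (ramp e t)^2 \<le> e * (e + 2 * \<bar>t\<bar>)"
proof -
  consider "t \<le> e" | "e < t" "t \<le> 2*e" | "2*e < t" by linarith
  then have "0 \<le> t * ramp_weight e t - (ramp e t)^2
      \<and> t * ramp_weight e t - (ramp e t)^2 \<le> e * (e + 2 * \<bar>t\<bar>)"
  proof cases
    case 1
    then show ?thesis using assms by (simp add: ramp_def ramp_weight_def)
  next
    case 2
    define s where "s = t - e"
    have s: "0 < s" "s \<le> e" using 2 by (auto simp: s_def)
    have eq: "t * ramp_weight e t - (ramp e t)^2 = s^3 * (s + 4*e) / (12 * e^2)"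
      using 2 assms unfolding ramp_def ramp_weight_def s_def
      by (simp add: field_simps power2_eq_square power3_eq_cube)
    have "s^3 * (s + 4*e) \<le> e^3 * (5*e)"
      using s by (intro mult_mono power_mono) auto
    also have "\<dots> \<le> (e * e) * (12 * e^2)"
      using assms by (simp add: power2_eq_square power3_eq_cube mult_right_mono)
    finally have "s^3 * (s + 4*e) / (12 * e^2) \<le> e * e"
      using assms by (simp add: pos_divide_le_eq)
    then show ?thesis using eq s assms by (auto intro: order_trans)
  next
    case 3
    have "t * ramp_weight e t - (ramp e t)^2 = e * (4*t/3 - 9*e/4)"
      using 3 assms unfolding ramp_def ramp_weight_def
      by (simp add: field_simps power2_eq_square)
    moreover have "0 \<le> 4*t/3 - 9*e/4" "4*t/3 - 9*e/4 \<le> e + 2 * \<bar>t\<bar>"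
      using 3 assms by auto
    ultimately show ?thesis using assms by (auto intro: mult_left_mono)
  qed
  then show "0 \<le> t * ramp_weight e t - (ramp e t)^2"
    and "t * ramp_weight e t - (ramp e t)^2 \<le> e * (e + 2 * \<bar>t\<bar>)" by auto
qed

section \<open>Continuous functions with compact support\<close>

lemma continuous_on_UNIV_if_vanishes_outside:
  fixes g :: "'a::topological_space \<Rightarrow> 'b::{topological_space,zero}"
  assumes "open S" "closed K" "K \<subseteq> S" "continuous_on S g" "\<And>x. x \<notin> K \<Longrightarrow> g x = 0"
  shows "continuous_on UNIV g"
proof -
  have "continuous_on (-K) g"
    using assms(5) continuous_on_cong[of "-K" "-K" g "\<lambda>_. 0"] by auto
  then have "continuous_on (S \<union> -K) g"
    using assms by (intro continuous_on_open_Un) auto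
  moreover have "S \<union> -K = UNIV" using assms by auto
  ultimately show ?thesis by simp
qed

lemma integral_eq_integral_UNIV_if_compact_support:
  fixes g :: "'a::euclidean_space \<Rightarrow> 'b::banach"
  assumes "continuous_on UNIV g" "compact K" "\<And>x. x \<notin> K \<Longrightarrow> g x = 0" "K \<subseteq> S"
  shows "g integrable_on S" "integral S g = integral UNIV g"
proof -
  obtain a where a: "K \<subseteq> cbox (-a) a"
    using bounded_subset_cbox_symmetric[OF compact_imp_bounded[OF assms(2)]] .
  have "g integrable_on cbox (-a) a"
    by (rule integrable_continuous, rule continuous_on_subset[OF assms(1)]) simp
  then have "(g has_integral integral (cbox (-a) a) g) UNIV"
    by (rule has_integral_on_superset[OF integrable_integral]) (use a assms(3) in auto)
  then have "g integrable_on UNIV" by blast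
  moreover have "(\<lambda>x. if x \<in> S then g x else 0) = g"
    using assms(3,4) by force
  ultimately show "g integrable_on S" "integral S g = integral UNIV g"
    by (metis integrable_restrict_UNIV integral_restrict_UNIV)+
qed

lemma has_integral_translate_if_compact_support:
  fixes g :: "'a::euclidean_space \<Rightarrow> 'b::banach"
  assumes "continuous_on UNIV g" "compact K" "\<And>x. x \<notin> K \<Longrightarrow> g x = 0"
  shows "((\<lambda>x. g (x + c)) has_integral integral UNIV g) UNIV"
proof -
  have "compact (K \<union> (\<lambda>x. x - c) ` K)"
    using assms(2) by (intro compact_Un compact_translation_subtract)
  then obtain a where a: "K \<union> (\<lambda>x. x - c) ` K \<subseteq> cbox (-a) a"
    using bounded_subset_cbox_symmetric compact_imp_bounded by metis
  have "K \<subseteq> cbox (-a + c) (a + c)"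
  proof
    fix x assume "x \<in> K"
    then have "x - c \<in> cbox (-a) a" using a by blast
    then show "x \<in> cbox (-a + c) (a + c)"
      using cbox_translation[of c "-a" a] by (force simp: add.commute)
  qed
  then have "(g has_integral integral UNIV g) (cbox (-a + c) (a + c))"
    using integral_eq_integral_UNIV_if_compact_support[OF assms] by (metis integrable_integral)
  then have "((\<lambda>x. g (x + c)) has_integral integral UNIV g) (cbox (-a) a)"
    using has_integral_shift_cbox_iff[of g c] by (simp add: o_def add.commute)
  then show ?thesis
  proof (rule has_integral_on_superset)
    show "g (x + c) = 0" if "x \<notin> cbox (-a) a" for x
      using that a assms(3)[of "x + c"] by force
  qed simp
qed

lemma uniformly_continuous_on_UNIV_if_compact_support:
  fixes g :: "'a::euclidean_space \<Rightarrow> 'b::real_normed_vector"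
  assumes "continuous_on UNIV g" "compact K" "\<And>x. x \<notin> K \<Longrightarrow> g x = 0"
  shows "uniformly_continuous_on UNIV g"
  unfolding uniformly_continuous_on_def
proof (intro allI impI)
  fix \<epsilon> :: real assume "\<epsilon> > 0"
  obtain r where r: "\<And>x. x \<in> K \<Longrightarrow> norm x \<le> r"
    using compact_imp_bounded[OF assms(2)] unfolding bounded_iff by blast
  have "uniformly_continuous_on (cball 0 (r + 1)) g"
    by (intro compact_uniformly_continuous continuous_on_subset[OF assms(1)]) auto
  then obtain d where d: "d > 0"
    "\<And>x y. x \<in> cball 0 (r + 1) \<Longrightarrow> y \<in> cball 0 (r + 1) \<Longrightarrow> dist y x < d \<Longrightarrow> dist (g y) (g x) < \<epsilon>"
    using \<open>\<epsilon> > 0\<close> unfolding uniformly_continuous_on_def by metis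
  have "dist (g y) (g x) < \<epsilon>" if "dist y x < min d 1" for x y
  proof (cases "x \<in> cball 0 (r + 1) \<and> y \<in> cball 0 (r + 1)")
    case True
    then show ?thesis using d that by auto
  next
    case False
    have "norm x \<le> norm y + dist y x" "norm y \<le> norm x + dist y x"
      using norm_triangle_ineq2[of x y] norm_triangle_ineq2[of y x]
      by (auto simp: dist_norm norm_minus_commute)
    then have "x \<notin> K" "y \<notin> K" using False that r by force+
    then show ?thesis using assms(3) \<open>\<epsilon> > 0\<close> by simp
  qed
  then show "\<exists>d>0. \<forall>x\<in>UNIV. \<forall>y\<in>UNIV. dist y x < d \<longrightarrow> dist (g y) (g x) < \<epsilon>"
    using d(1) by (metis min_less_iff_conj zero_less_one)
qed

lemma has_real_derivative_along_line:
  fixes F :: "'a::real_normed_vector \<Rightarrow> real"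
  assumes "(F has_derivative F') (at (x + t *\<^sub>R v))"
  shows "((\<lambda>s. F (x + s *\<^sub>R v)) has_real_derivative F' v) (at t)"
proof -
  have "((\<lambda>s. x + s *\<^sub>R v) has_derivative (\<lambda>s. s *\<^sub>R v)) (at t)"
    by (auto intro!: derivative_eq_intros)
  from has_derivative_compose[OF this assms]
  have "((\<lambda>s. F (x + s *\<^sub>R v)) has_derivative (\<lambda>s. F' (s *\<^sub>R v))) (at t)" .
  moreover have "linear F'" using assms by (rule has_derivative_linear)
  ultimately show ?thesis
    by (simp add: has_field_derivative_def linear_cmul mult.commute[of _ "F' v"])
qed

lemma uniform_limit_difference_quotient:
  fixes F :: "'a::real_normed_vector \<Rightarrow> real"
  assumes deriv: "\<And>x. (F has_derivative F' x) (at x)"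
    and unif: "uniformly_continuous_on UNIV (\<lambda>x. F' x v)"
  shows "uniform_limit UNIV (\<lambda>h x. (F (x + h *\<^sub>R v) - F x) / h) (\<lambda>x. F' x v) (at_right 0)"
  unfolding uniform_limit_iff
proof (intro allI impI)
  fix \<epsilon> :: real assume "\<epsilon> > 0"
  have nv: "0 < norm v + 1"
    using norm_ge_zero[of v] by linarith
  obtain d where d: "d > 0" "\<And>x y. dist y x < d \<Longrightarrow> dist (F' y v) (F' x v) < \<epsilon>"
    using unif \<open>\<epsilon> > 0\<close> unfolding uniformly_continuous_on_def by blast
  have "dist ((F (x + h *\<^sub>R v) - F x) / h) (F' x v) < \<epsilon>"
    if h: "0 < h" "h < d / (norm v + 1)" for h x
  proof -
    have "\<exists>z. 0 < z \<and> z < h \<and> F (x + h *\<^sub>R v) - F (x + 0 *\<^sub>R v) = (h - 0) * F' (x + z *\<^sub>R v) v"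
      by (rule MVT2) (use h deriv has_real_derivative_along_line in blast)+
    then obtain z where z: "0 < z" "z < h" "(F (x + h *\<^sub>R v) - F x) / h = F' (x + z *\<^sub>R v) v"
      using h by auto
    have "dist (x + z *\<^sub>R v) x = z * norm v" using z by (simp add: dist_norm)
    also have "\<dots> \<le> h * (norm v + 1)" using z by (intro mult_mono) auto
    also have "\<dots> < d"
      using h nv by (simp add: less_divide_eq)
    finally show ?thesis using d(2) z(3) by simp
  qed
  moreover have "\<forall>\<^sub>F h in at_right 0. h \<in> {0<..<d / (norm v + 1)}"
    using d(1) nv by (intro eventually_at_right_real) simp
  ultimately show "\<forall>\<^sub>F h in at_right 0. \<forall>x\<in>UNIV. dist ((F (x + h *\<^sub>R v) - F x) / h) (F' x v) < \<epsilon>"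
    by (auto elim: eventually_mono)
qed

lemma has_integral_difference_quotient:
  fixes F :: "'a::euclidean_space \<Rightarrow> real"
  assumes "continuous_on UNIV F" "compact K" "\<And>x. x \<notin> K \<Longrightarrow> F x = 0"
  shows "((\<lambda>x. (F (x + h *\<^sub>R v) - F x) / h) has_integral 0) UNIV"
proof -
  have "((\<lambda>x. F (x + h *\<^sub>R v) - F x) has_integral 0) UNIV"
    using has_integral_diff[OF has_integral_translate_if_compact_support[OF assms]
        integrable_integral[OF integral_eq_integral_UNIV_if_compact_support(1)[OF assms subset_UNIV]]]
    by simp
  from has_integral_divide[OF this, of h] show ?thesis
    by simp
qed

lemma has_derivative_eq_0_outside:
  assumes "(F has_derivative F') (at x)" "closed K" "x \<notin> K" "\<And>y. y \<notin> K \<Longrightarrow> F y = 0"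
  shows "F' = (\<lambda>_. 0)"
proof -
  have "(F has_derivative (\<lambda>_. 0)) (at x)"
    using assms(2-4) by (intro has_derivative_transform_within_open[OF has_derivative_const, of "-K"]) auto
  with assms(1) show ?thesis
    by (rule has_derivative_unique)
qed

lemma has_integral_0_if_uniform_limit:
  fixes Q :: "'b \<Rightarrow> 'a::euclidean_space \<Rightarrow> real"
  assumes "uniform_limit (cbox a b) Q g F" "\<And>h. continuous_on (cbox a b) (Q h)" "F \<noteq> bot"
    and "\<forall>\<^sub>F h in F. (Q h has_integral 0) (cbox a b)"
  shows "(g has_integral 0) (cbox a b)"
proof -
  obtain I J where I: "\<And>h. (Q h has_integral I h) (cbox a b)"
    and J: "(g has_integral J) (cbox a b)" and lim: "(I \<longlongrightarrow> J) F"
    using uniform_limit_integral_cbox[OF assms(1-3)] by metis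
  have "\<forall>\<^sub>F h in F. I h = 0"
    using assms(4) by (rule eventually_mono) (use I has_integral_unique in blast)
  then have "(I \<longlongrightarrow> 0) F"
    by (rule tendsto_eventually)
  with J lim assms(3) show ?thesis
    using tendsto_unique by metis
qed

lemma integral_directional_derivative_eq_0:
  fixes F :: "'a::euclidean_space \<Rightarrow> real"
  assumes deriv: "\<And>x. (F has_derivative F' x) (at x)"
    and cont: "continuous_on UNIV (\<lambda>x. F' x v)"
    and K: "compact K" "\<And>x. x \<notin> K \<Longrightarrow> F x = 0"
  shows "integral UNIV (\<lambda>x. F' x v) = 0"
proof -
  define Q where "Q h x = (F (x + h *\<^sub>R v) - F x) / h" for h x
  have cF: "continuous_on UNIV F"
    using deriv has_derivative_continuous_on by blast
  have F'_out: "F' x v = 0" if "x \<notin> K" for x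
    using has_derivative_eq_0_outside[OF deriv compact_imp_closed[OF K(1)] that K(2)] by simp
  obtain r where r: "\<And>x. x \<in> K \<Longrightarrow> norm x \<le> r"
    using compact_imp_bounded[OF K(1)] unfolding bounded_iff by blast
  obtain a :: 'a where a: "cball 0 (r + norm v) \<subseteq> cbox (-a) a"
    using bounded_subset_cbox_symmetric[OF bounded_cball] .
  have outside: "x \<notin> K" "x + h *\<^sub>R v \<notin> K" if "x \<notin> cbox (-a) a" "0 \<le> h" "h \<le> 1" for x h
  proof -
    have "norm x > r + norm v" using a that(1) by (meson mem_cball_0 not_le subsetD)
    moreover have "norm x \<le> norm (x + h *\<^sub>R v) + h * norm v" "h * norm v \<le> norm v"
      using norm_triangle_ineq4[of "x + h *\<^sub>R v" "h *\<^sub>R v"] that(2,3)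
      by (simp_all add: mult_left_le_one_le)
    ultimately have "norm x > r" "norm (x + h *\<^sub>R v) > r"
      using norm_ge_zero[of v] by linarith+
    then show "x \<notin> K" "x + h *\<^sub>R v \<notin> K" using r not_le by blast+
  qed
  have "((\<lambda>x. F' x v) has_integral 0) (cbox (-a) a)"
  proof (rule has_integral_0_if_uniform_limit)
    show "uniform_limit (cbox (-a) a) Q (\<lambda>x. F' x v) (at_right 0)"
      unfolding Q_def
      by (rule uniform_limit_on_subset[OF uniform_limit_difference_quotient[OF deriv]])
        (use uniformly_continuous_on_UNIV_if_compact_support[OF cont K(1)] F'_out in auto)
    show "continuous_on (cbox (-a) a) (Q h)" for h
      unfolding Q_def by (cases "h = 0") (auto intro!: continuous_intros continuous_on_compose2[OF cF])
    show "\<forall>\<^sub>F h in at_right 0. (Q h has_integral 0) (cbox (-a) a)"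
      using eventually_at_right_real[OF zero_less_one]
    proof (rule eventually_mono)
      fix h :: real assume "h \<in> {0<..<1}"
      then have "Q h = (\<lambda>x. if x \<in> cbox (-a) a then Q h x else 0)"
        using outside by (force simp: Q_def K(2))
      moreover have "(Q h has_integral 0) UNIV"
        unfolding Q_def using cF K by (rule has_integral_difference_quotient)
      ultimately show "(Q h has_integral 0) (cbox (-a) a)"
        by (metis has_integral_restrict_UNIV)
    qed
  qed simp
  then have "((\<lambda>x. F' x v) has_integral 0) UNIV"
    by (rule has_integral_on_superset) (use outside(1)[of _ 0] F'_out in auto)
  then show ?thesis
    by (rule integral_unique)
qed

lemma integral_pos_if_continuous_nonneg:
  fixes g :: "'a::euclidean_space \<Rightarrow> real"
  assumes "continuous_on UNIV g" "\<And>x. g x \<ge> 0" "g integrable_on UNIV" "g x0 > 0"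
  shows "integral UNIV g > 0"
proof -
  have "\<forall>\<^sub>F y in at x0. g y > g x0 / 2"
    using assms(1,4) by (intro order_tendstoD(1)) (auto simp: continuous_on_eq_continuous_at isCont_def)
  then obtain d where d: "d > 0" "\<And>y. y \<noteq> x0 \<Longrightarrow> dist y x0 < d \<Longrightarrow> g y > g x0 / 2"
    unfolding eventually_at by blast
  have g_ball: "g y > g x0 / 2" if "y \<in> ball x0 d" for y
    using d that assms(4) by (cases "y = x0") (auto simp: dist_commute)
  obtain a b where ab: "cbox a b \<subseteq> ball x0 d" "\<forall>i\<in>Basis. a \<bullet> i < b \<bullet> i"
    using open_contains_cbox[of "ball x0 d" x0] d(1) by (metis centre_in_ball open_ball)
  have g_ab: "g integrable_on cbox a b"
    by (rule integrable_continuous, rule continuous_on_subset[OF assms(1)]) simp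
  have "0 < Henstock_Kurzweil_Integration.content (cbox a b) * (g x0 / 2)"
    using content_pos_lt[OF ab(2)] assms(4) by simp
  also have "\<dots> = integral (cbox a b) (\<lambda>_. g x0 / 2)"
    by simp
  also have "\<dots> \<le> integral (cbox a b) g"
    using g_ball ab(1) by (intro integral_le g_ab) (auto intro: less_imp_le simp del: mem_ball)
  also have "\<dots> \<le> integral UNIV g"
    by (rule integral_subset_le[OF _ g_ab assms(3)]) (simp_all add: assms(2))
  finally show ?thesis .
qed

section \<open>Partial derivatives and the reflection\<close>

lemma partial_eq_of_has_derivative:
  "(g has_derivative G) (at x) \<Longrightarrow> partial i g x = G (axis i 1)"
  by (simp add: partial_def frechet_derivative_at[symmetric])

lemma partial_cong_open:
  assumes "open S" "x \<in> S" "\<And>y. y \<in> S \<Longrightarrow> g y = h y"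
  shows "partial i g x = partial i h x"
proof -
  have "(g has_derivative D) (at x) \<longleftrightarrow> (h has_derivative D) (at x)" for D
  proof
    show "(h has_derivative D) (at x)" if "(g has_derivative D) (at x)"
      by (rule has_derivative_transform_within_open[OF that assms(1,2)]) (simp add: assms(3))
    show "(g has_derivative D) (at x)" if "(h has_derivative D) (at x)"
      by (rule has_derivative_transform_within_open[OF that assms(1,2)]) (simp add: assms(3))
  qed
  then show ?thesis by (simp add: partial_def frechet_derivative_def)
qed

lemma partial_eq_0_if_vanishes_on_open:
  assumes "open S" "x \<in> S" "\<And>y. y \<in> S \<Longrightarrow> g y = 0"
  shows "partial i g x = 0"
proof -
  have "partial i g x = partial i (\<lambda>_. 0) x"
    by (rule partial_cong_open[OF assms(1,2)]) (simp add: assms(3))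
  also have "\<dots> = 0"
    by (simp add: partial_def)
  finally show ?thesis .
qed

lemma partial_diff:
  assumes "g differentiable (at x)" "h differentiable (at x)"
  shows "partial i (\<lambda>y. g y - h y) x = partial i g x - partial i h x"
  using partial_eq_of_has_derivative[OF has_derivative_diff[OF assms[unfolded frechet_derivative_works]]]
  unfolding partial_def .

lemma partial_cmult:
  assumes "g differentiable (at x)"
  shows "partial i (\<lambda>y. c * g y) x = c * partial i g x"
  using partial_eq_of_has_derivative[OF has_derivative_mult_right[OF assms[unfolded frechet_derivative_works]]]
  unfolding partial_def .

lemma differentiable_transform_within_open:
  assumes "f differentiable (at x)" "open S" "x \<in> S" "\<And>y. y \<in> S \<Longrightarrow> f y = g y"
  shows "g differentiable (at x)"
  using assms has_derivative_transform_within_open unfolding differentiable_def by blast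

lemma partials_diff:
  assumes "open \<Omega>" "C2_on \<Omega> g" "C2_on \<Omega> h" "y \<in> \<Omega>"
  shows "partial i (\<lambda>x. g x - h x) y = partial i g y - partial i h y"
    and "partial j (partial i (\<lambda>x. g x - h x)) y = partial j (partial i g) y - partial j (partial i h) y"
proof -
  have first: "partial i (\<lambda>x. g x - h x) z = partial i g z - partial i h z" if "z \<in> \<Omega>" for i z
    using assms(2,3) that by (intro partial_diff) (auto simp: C2_on_def)
  then show "partial i (\<lambda>x. g x - h x) y = partial i g y - partial i h y"
    using assms(4) .
  have "partial j (partial i (\<lambda>x. g x - h x)) y = partial j (\<lambda>z. partial i g z - partial i h z) y"
    using first by (rule partial_cong_open[OF assms(1,4)])
  also have "\<dots> = partial j (partial i g) y - partial j (partial i h) y"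
    using assms(2-4) by (intro partial_diff) (auto simp: C2_on_def)
  finally show "partial j (partial i (\<lambda>x. g x - h x)) y = partial j (partial i g) y - partial j (partial i h) y" .
qed

lemma C2_on_diff:
  assumes "open \<Omega>" "C2_on \<Omega> g" "C2_on \<Omega> h"
  shows "C2_on \<Omega> (\<lambda>x. g x - h x)"
  unfolding C2_on_def
proof (intro conjI allI ballI)
  note partials = partials_diff[OF assms]
  show "(\<lambda>x. g x - h x) differentiable (at x)" if "x \<in> \<Omega>" for x
    using assms that by (auto simp: C2_on_def)
  show "partial i (\<lambda>x. g x - h x) differentiable (at x)" if "x \<in> \<Omega>" for i x
  proof (rule differentiable_transform_within_open[OF _ assms(1) that])
    show "(\<lambda>y. partial i g y - partial i h y) differentiable (at x)"
      using assms that by (auto simp: C2_on_def)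
  qed (simp add: partials(1))
  show "continuous_on \<Omega> (partial i (\<lambda>x. g x - h x))" for i
  proof (rule continuous_on_eq)
    show "continuous_on \<Omega> (\<lambda>y. partial i g y - partial i h y)"
      using assms(2,3) unfolding C2_on_def by (intro continuous_on_diff) blast+
  qed (simp add: partials(1))
  show "continuous_on \<Omega> (partial j (partial i (\<lambda>x. g x - h x)))" for i j
  proof (rule continuous_on_eq)
    show "continuous_on \<Omega> (\<lambda>y. partial j (partial i g) y - partial j (partial i h) y)"
      using assms(2,3) unfolding C2_on_def by (intro continuous_on_diff) blast+
  qed (simp add: partials(2))
qed

lemma laplacian_diff:
  assumes "open \<Omega>" "C2_on \<Omega> g" "C2_on \<Omega> h" "x \<in> \<Omega>"
  shows "laplacian (\<lambda>x. g x - h x) x = laplacian g x - laplacian h x"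
  by (simp add: laplacian_def partials_diff(2)[OF assms] sum_subtractf)

lemma reflect_reflect [simp]: "reflect k (reflect k x) = x"
  by (simp add: reflect_def vec_eq_iff)

lemma bounded_linear_reflect: "bounded_linear (reflect k)"
  by (simp add: linear_conv_bounded_linear[symmetric] linearI reflect_def vec_eq_iff)

lemma reflect_closure:
  assumes "reflect k ` \<Omega> \<subseteq> \<Omega>"
  shows "reflect k ` closure \<Omega> \<subseteq> closure \<Omega>"
  using assms closure_subset
  by (intro image_closure_subset linear_continuous_on bounded_linear_reflect) auto

lemma reflect_frontier:
  assumes "open \<Omega>" "reflect k ` \<Omega> \<subseteq> \<Omega>"
  shows "reflect k ` frontier \<Omega> \<subseteq> frontier \<Omega>"
proof
  fix y assume "y \<in> reflect k ` frontier \<Omega>"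
  then obtain x where x: "y = reflect k x" "x \<in> closure \<Omega>" "x \<notin> \<Omega>"
    using assms(1) by (auto simp: frontier_def interior_open)
  have "reflect k x \<notin> \<Omega>"
    using assms(2) x(3) by (metis image_eqI reflect_reflect subsetD)
  then show "y \<in> frontier \<Omega>"
    using x reflect_closure[OF assms(2)] assms(1) by (auto simp: frontier_def interior_open)
qed

definition reflect_sign :: "'n \<Rightarrow> 'n \<Rightarrow> real" where
  "reflect_sign k i = (if i = k then -1 else 1)"

lemma reflect_axis: "reflect k (axis i 1) = reflect_sign k i *\<^sub>R axis i (1::real)"
  by (simp add: reflect_def reflect_sign_def vec_eq_iff axis_def)

lemma differentiable_reflect_compose:
  "g differentiable (at (reflect k x)) \<Longrightarrow> (\<lambda>y. g (reflect k y)) differentiable (at x)"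
  using differentiable_chain_at[OF bounded_linear_imp_differentiable[OF bounded_linear_reflect]]
  by (simp add: o_def)

lemma partial_reflect_compose:
  assumes "g differentiable (at (reflect k x))"
  shows "partial i (\<lambda>y. g (reflect k y)) x = reflect_sign k i * partial i g (reflect k x)"
proof -
  define G where "G = frechet_derivative g (at (reflect k x))"
  have G: "(g has_derivative G) (at (reflect k x))"
    using assms unfolding G_def frechet_derivative_works .
  have "((\<lambda>y. g (reflect k y)) has_derivative (\<lambda>h. G (reflect k h))) (at x)"
    using has_derivative_compose[OF bounded_linear_imp_has_derivative[OF bounded_linear_reflect] G] .
  then have "partial i (\<lambda>y. g (reflect k y)) x = G (reflect k (axis i 1))"
    by (rule partial_eq_of_has_derivative)
  also have "\<dots> = reflect_sign k i * G (axis i 1)"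
    using linear_cmul[OF has_derivative_linear[OF G]] by (simp add: reflect_axis)
  finally show ?thesis by (simp add: partial_def G_def)
qed

lemma partials_reflect_compose:
  assumes "open \<Omega>" "reflect k ` \<Omega> \<subseteq> \<Omega>" "C2_on \<Omega> g" "y \<in> \<Omega>"
  shows "partial i (\<lambda>x. g (reflect k x)) y = reflect_sign k i * partial i g (reflect k y)"
    and "partial j (partial i (\<lambda>x. g (reflect k x))) y
      = reflect_sign k i * reflect_sign k j * partial j (partial i g) (reflect k y)"
proof -
  have R: "reflect k z \<in> \<Omega>" if "z \<in> \<Omega>" for z
    using assms(2) that by blast
  have first: "partial i (\<lambda>x. g (reflect k x)) z = reflect_sign k i * partial i g (reflect k z)"
    if "z \<in> \<Omega>" for i z
    using assms(3) R[OF that] by (intro partial_reflect_compose) (simp add: C2_on_def)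
  then show "partial i (\<lambda>x. g (reflect k x)) y = reflect_sign k i * partial i g (reflect k y)"
    using assms(4) .
  have "partial j (partial i (\<lambda>x. g (reflect k x))) y
      = partial j (\<lambda>z. reflect_sign k i * partial i g (reflect k z)) y"
    using first by (rule partial_cong_open[OF assms(1,4)])
  also have "\<dots> = reflect_sign k i * partial j (\<lambda>z. partial i g (reflect k z)) y"
    using assms(3) R[OF assms(4)]
    by (intro partial_cmult differentiable_reflect_compose) (simp add: C2_on_def)
  also have "\<dots> = reflect_sign k i * reflect_sign k j * partial j (partial i g) (reflect k y)"
    using assms(3) R[OF assms(4)] by (subst partial_reflect_compose) (simp_all add: C2_on_def)
  finally show "partial j (partial i (\<lambda>x. g (reflect k x))) y
      = reflect_sign k i * reflect_sign k j * partial j (partial i g) (reflect k y)" .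
qed

lemma C2_on_reflect_compose:
  assumes "open \<Omega>" "reflect k ` \<Omega> \<subseteq> \<Omega>" "C2_on \<Omega> g"
  shows "C2_on \<Omega> (\<lambda>x. g (reflect k x))"
  unfolding C2_on_def
proof (intro conjI allI ballI)
  note partials = partials_reflect_compose[OF assms]
  have g: "\<And>y. y \<in> \<Omega> \<Longrightarrow> g differentiable (at y)"
    "\<And>i y. y \<in> \<Omega> \<Longrightarrow> partial i g differentiable (at y)"
    "\<And>i. continuous_on \<Omega> (partial i g)" "\<And>i j. continuous_on \<Omega> (partial j (partial i g))"
    using assms(3) unfolding C2_on_def by blast+
  have R: "continuous_on \<Omega> (reflect k)" "reflect k ` \<Omega> \<subseteq> \<Omega>"
    using assms(2) linear_continuous_on[OF bounded_linear_reflect] by auto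
  show "(\<lambda>x. g (reflect k x)) differentiable (at x)" if "x \<in> \<Omega>" for x
    using that R(2) g(1) by (intro differentiable_reflect_compose) auto
  show "partial i (\<lambda>x. g (reflect k x)) differentiable (at x)" if "x \<in> \<Omega>" for i x
  proof (rule differentiable_transform_within_open[OF _ assms(1) that])
    show "(\<lambda>y. reflect_sign k i * partial i g (reflect k y)) differentiable (at x)"
      using that R(2) g(2) by (auto intro: differentiable_reflect_compose)
  qed (simp add: partials(1))
  show "continuous_on \<Omega> (partial i (\<lambda>x. g (reflect k x)))" for i
  proof (rule continuous_on_eq)
    show "continuous_on \<Omega> (\<lambda>y. reflect_sign k i * partial i g (reflect k y))"
      by (intro continuous_on_mult_left continuous_on_compose2[OF g(3) R])
  qed (simp add: partials(1))
  show "continuous_on \<Omega> (partial j (partial i (\<lambda>x. g (reflect k x))))" for i j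
  proof (rule continuous_on_eq)
    show "continuous_on \<Omega> (\<lambda>y. reflect_sign k i * reflect_sign k j * partial j (partial i g) (reflect k y))"
      by (intro continuous_on_mult_left continuous_on_compose2[OF g(4) R])
  qed (simp add: partials(2))
qed

lemma laplacian_reflect_compose:
  assumes "open \<Omega>" "reflect k ` \<Omega> \<subseteq> \<Omega>" "C2_on \<Omega> g" "x \<in> \<Omega>"
  shows "laplacian (\<lambda>x. g (reflect k x)) x = laplacian g (reflect k x)"
proof -
  have "reflect_sign k i * reflect_sign k i = 1" for i
    by (simp add: reflect_sign_def)
  then show ?thesis
    by (simp add: laplacian_def partials_reflect_compose(2)[OF assms])
qed

section \<open>Test functions and the Rayleigh quotient\<close>

lemma test_fun_integrable:
  fixes \<phi> V :: "real^'n::finite \<Rightarrow> real"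
  assumes "test_fun \<Omega> \<phi>" "open \<Omega>" "continuous_on \<Omega> V"
  shows "(\<lambda>x. \<Sum>i\<in>UNIV. (partial i \<phi> x)^2) integrable_on \<Omega>"
    and "(\<lambda>x. V x * (\<phi> x)^2) integrable_on \<Omega>"
    and "(\<lambda>x. (\<phi> x)^2) integrable_on \<Omega>"
proof -
  define K where "K = closure {x. \<phi> x \<noteq> 0}"
  have K: "compact K" "K \<subseteq> \<Omega>" "closed K"
    using assms(1) unfolding test_fun_def K_def by simp_all
  have "\<phi> differentiable_on UNIV" "\<And>i. continuous_on UNIV (partial i \<phi>)"
    using assms(1) unfolding test_fun_def differentiable_on_def by simp_all
  then have \<phi>: "continuous_on UNIV \<phi>" "\<And>i. continuous_on UNIV (partial i \<phi>)"
    using differentiable_imp_continuous_on by blast+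
  have \<phi>_out: "\<phi> x = 0" if "x \<notin> K" for x
    using that closure_subset[of "{x. \<phi> x \<noteq> 0}"] unfolding K_def by auto
  have partial_out: "partial i \<phi> x = 0" if "x \<notin> K" for i x
  proof (rule partial_eq_0_if_vanishes_on_open)
    show "open (-K)" using K(3) by (rule open_Compl)
  qed (use that \<phi>_out in auto)
  show "(\<lambda>x. \<Sum>i\<in>UNIV. (partial i \<phi> x)^2) integrable_on \<Omega>"
  proof (rule integral_eq_integral_UNIV_if_compact_support(1)[OF _ K(1) _ K(2)])
    show "continuous_on UNIV (\<lambda>x. \<Sum>i\<in>UNIV. (partial i \<phi> x)^2)"
      by (intro continuous_intros \<phi>(2))
  qed (simp add: partial_out)
  show "(\<lambda>x. (\<phi> x)^2) integrable_on \<Omega>"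
  proof (rule integral_eq_integral_UNIV_if_compact_support(1)[OF _ K(1) _ K(2)])
    show "continuous_on UNIV (\<lambda>x. (\<phi> x)^2)"
      by (intro continuous_intros \<phi>(1))
  qed (simp add: \<phi>_out)
  have "continuous_on UNIV (\<lambda>x. V x * (\<phi> x)^2)"
  proof (rule continuous_on_UNIV_if_vanishes_outside[OF assms(2) K(3,2)])
    show "continuous_on \<Omega> (\<lambda>x. V x * (\<phi> x)^2)"
      by (intro continuous_intros assms(3) continuous_on_subset[OF \<phi>(1)]) simp
  qed (simp add: \<phi>_out)
  then show "(\<lambda>x. V x * (\<phi> x)^2) integrable_on \<Omega>"
    by (rule integral_eq_integral_UNIV_if_compact_support(1)[OF _ K(1) _ K(2)]) (simp add: \<phi>_out)
qed

text \<open>The hypothesis \<open>C \<ge> 0\<close> covers the junk value \<open>rayleigh \<Omega> V \<phi> = 0\<close> when \<open>\<integral>\<phi>\<^sup>2 = 0\<close>.\<close>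

lemma rayleigh_ge:
  fixes \<phi> V :: "real^'n::finite \<Rightarrow> real"
  assumes "test_fun \<Omega> \<phi>" "open \<Omega>" "continuous_on \<Omega> V"
    and "\<And>x. x \<in> \<Omega> \<Longrightarrow> V x \<le> C" "C \<ge> 0"
  shows "rayleigh \<Omega> V \<phi> \<ge> -C"
proof -
  note integrable = test_fun_integrable[OF assms(1-3)]
  define A where "A = integral \<Omega> (\<lambda>x. \<Sum>i\<in>UNIV. (partial i \<phi> x)^2)"
  define B where "B = integral \<Omega> (\<lambda>x. V x * (\<phi> x)^2)"
  define D where "D = integral \<Omega> (\<lambda>x. (\<phi> x)^2)"
  have "A \<ge> 0" unfolding A_def by (rule integral_nonneg[OF integrable(1)]) (simp add: sum_nonneg)
  have "D \<ge> 0" unfolding D_def by (rule integral_nonneg[OF integrable(3)]) simp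
  have "B \<le> integral \<Omega> (\<lambda>x. C * (\<phi> x)^2)"
    unfolding B_def
  proof (rule integral_le[OF integrable(2)])
    show "(\<lambda>x. C * (\<phi> x)^2) integrable_on \<Omega>"
      using integrable_on_cmult_left[OF integrable(3), of C] by simp
    show "V x * (\<phi> x)^2 \<le> C * (\<phi> x)^2" if "x \<in> \<Omega>" for x
      using assms(4)[OF that] by (rule mult_right_mono) simp
  qed
  then have "B \<le> C * D" by (simp add: D_def)
  have "rayleigh \<Omega> V \<phi> = (A - B) / D"
    unfolding rayleigh_def A_def B_def D_def ..
  then show ?thesis
    using \<open>A \<ge> 0\<close> \<open>D \<ge> 0\<close> \<open>B \<le> C * D\<close> assms(5)
    by (cases "D = 0") (simp_all add: le_divide_eq)
qed

lemma first_dirichlet_eigenvalue_le_rayleigh: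
  fixes \<phi> V :: "real^'n::finite \<Rightarrow> real"
  assumes "test_fun \<Omega> \<phi>" "\<phi> x \<noteq> 0" "open \<Omega>" "continuous_on \<Omega> V"
    and "\<And>x. x \<in> \<Omega> \<Longrightarrow> V x \<le> C"
  shows "first_dirichlet_eigenvalue \<Omega> V \<le> rayleigh \<Omega> V \<phi>"
  unfolding first_dirichlet_eigenvalue_def
proof (rule cInf_lower)
  show "rayleigh \<Omega> V \<phi> \<in> {rayleigh \<Omega> V \<phi> |\<phi>. test_fun \<Omega> \<phi> \<and> (\<exists>x. \<phi> x \<noteq> 0)}"
    using assms(1,2) by blast
  have "rayleigh \<Omega> V \<psi> \<ge> - max C 0" if "test_fun \<Omega> \<psi>" for \<psi>
    using assms(3-5) that by (intro rayleigh_ge) (auto simp: le_max_iff_disj)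
  then show "bdd_below {rayleigh \<Omega> V \<phi> |\<phi>. test_fun \<Omega> \<phi> \<and> (\<exists>x. \<phi> x \<noteq> 0)}"
    by (intro bdd_belowI[where m="- max C 0"]) blast
qed

section \<open>A maximum principle for stable operators\<close>

locale dirichlet_subsolution =
  fixes \<Omega> :: "(real^'n::finite) set" and V w :: "real^'n \<Rightarrow> real"
  assumes open_domain: "open \<Omega>" and bounded_domain: "bounded \<Omega>"
    and continuous_potential: "continuous_on (closure \<Omega>) V"
    and C2: "C2_on \<Omega> w" and continuous_closure: "continuous_on (closure \<Omega>) w"
    and boundary_zero: "\<And>x. x \<in> frontier \<Omega> \<Longrightarrow> w x = 0"
    and subsolution: "\<And>x. x \<in> \<Omega> \<Longrightarrow> 0 < w x \<Longrightarrow> - laplacian w x \<le> V x * w x"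
begin

definition superlevel :: "real \<Rightarrow> (real^'n) set" where
  "superlevel \<delta> = {x \<in> closure \<Omega>. \<delta> \<le> w x}"

lemma compact_superlevel: "compact (superlevel \<delta>)"
proof -
  have "closed (closure \<Omega> \<inter> w -` {\<delta>..})"
    by (rule continuous_closed_preimage[OF continuous_closure closed_closure closed_atLeast])
  moreover have "closure \<Omega> \<inter> w -` {\<delta>..} = superlevel \<delta>"
    unfolding superlevel_def by auto
  moreover have "bounded (superlevel \<delta>)"
    using bounded_domain by (rule bounded_subset[OF bounded_closure]) (auto simp: superlevel_def)
  ultimately show ?thesis
    by (simp add: compact_eq_bounded_closed)
qed

lemma superlevel_subset: "\<delta> > 0 \<Longrightarrow> superlevel \<delta> \<subseteq> \<Omega>"
  using boundary_zero interior_open[OF open_domain]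
  by (fastforce simp: superlevel_def frontier_def)

lemma less_if_notin_superlevel: "x \<in> \<Omega> \<Longrightarrow> x \<notin> superlevel \<delta> \<Longrightarrow> w x < \<delta>"
  using closure_subset by (force simp: superlevel_def)

lemma continuous_on_UNIV_extend_by_zero:
  fixes h :: "real^'n \<Rightarrow> real"
  assumes "\<delta> > 0" "continuous_on \<Omega> h" "\<And>x. x \<in> \<Omega> \<Longrightarrow> w x < \<delta> \<Longrightarrow> h x = 0"
  shows "continuous_on UNIV (\<lambda>x. if x \<in> \<Omega> then h x else 0)"
proof (rule continuous_on_UNIV_if_vanishes_outside[OF open_domain _ superlevel_subset[OF assms(1)]])
  show "closed (superlevel \<delta>)"
    using compact_superlevel by (rule compact_imp_closed)
  show "continuous_on \<Omega> (\<lambda>x. if x \<in> \<Omega> then h x else 0)"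
    using assms(2) by (rule continuous_on_eq) simp
qed (use assms(3) less_if_notin_superlevel in auto)

lemma integrable_on_domain_if_vanishes_below:
  fixes h :: "real^'n \<Rightarrow> real"
  assumes "\<delta> > 0" "continuous_on \<Omega> h" "\<And>x. x \<in> \<Omega> \<Longrightarrow> w x < \<delta> \<Longrightarrow> h x = 0"
  shows "h integrable_on \<Omega>"
proof -
  have "continuous_on UNIV (\<lambda>x. if x \<in> \<Omega> then h x else 0)"
    using assms by (rule continuous_on_UNIV_extend_by_zero)
  then have "(\<lambda>x. if x \<in> \<Omega> then h x else 0) integrable_on UNIV"
    by (rule integral_eq_integral_UNIV_if_compact_support(1)[OF _ compact_superlevel[of \<delta>]])
      (use assms(3) less_if_notin_superlevel in auto)
  then show ?thesis
    by (simp add: integrable_restrict_UNIV)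
qed

lemma integral_pos_on_domain_if_vanishes_below:
  fixes h :: "real^'n \<Rightarrow> real"
  assumes "\<delta> > 0" "continuous_on \<Omega> h" "\<And>x. x \<in> \<Omega> \<Longrightarrow> w x < \<delta> \<Longrightarrow> h x = 0"
    and "\<And>x. x \<in> \<Omega> \<Longrightarrow> h x \<ge> 0" "x0 \<in> \<Omega>" "h x0 > 0"
  shows "integral \<Omega> h > 0"
proof -
  have "integral UNIV (\<lambda>x. if x \<in> \<Omega> then h x else 0) > 0"
  proof (rule integral_pos_if_continuous_nonneg)
    show "continuous_on UNIV (\<lambda>x. if x \<in> \<Omega> then h x else 0)"
      using assms(1-3) by (rule continuous_on_UNIV_extend_by_zero)
    show "(\<lambda>x. if x \<in> \<Omega> then h x else 0) integrable_on UNIV"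
      using integrable_on_domain_if_vanishes_below[OF assms(1-3)] by (simp add: integrable_restrict_UNIV)
  qed (use assms(4-6) in auto)
  then show ?thesis
    by (simp add: integral_restrict_UNIV)
qed

lemma has_derivative_extend_by_zero:
  fixes h :: "real^'n \<Rightarrow> real"
  assumes "\<delta> > 0" "\<And>x. x \<in> \<Omega> \<Longrightarrow> w x < \<delta> \<Longrightarrow> h x = 0"
  shows "x \<in> \<Omega> \<Longrightarrow> (h has_derivative H) (at x)
      \<Longrightarrow> ((\<lambda>y. if y \<in> \<Omega> then h y else 0) has_derivative H) (at x)"
    and "x \<notin> \<Omega> \<Longrightarrow> ((\<lambda>y. if y \<in> \<Omega> then h y else 0) has_derivative (\<lambda>_. 0)) (at x)"
proof -
  show "((\<lambda>y. if y \<in> \<Omega> then h y else 0) has_derivative H) (at x)"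
    if "x \<in> \<Omega>" "(h has_derivative H) (at x)"
    by (rule has_derivative_transform_within_open[OF that(2) open_domain that(1)]) simp
  show "((\<lambda>y. if y \<in> \<Omega> then h y else 0) has_derivative (\<lambda>_. 0)) (at x)" if "x \<notin> \<Omega>"
  proof (rule has_derivative_transform_within_open[OF has_derivative_const])
    show "open (- superlevel \<delta>)"
      using compact_superlevel by (simp add: compact_imp_closed open_Compl)
    show "x \<in> - superlevel \<delta>"
      using that superlevel_subset[OF assms(1)] by blast
  qed (use assms(2) less_if_notin_superlevel in auto)
qed

lemma has_derivative_w: "x \<in> \<Omega> \<Longrightarrow> (w has_derivative frechet_derivative w (at x)) (at x)"
  and has_derivative_partial_w:
    "x \<in> \<Omega> \<Longrightarrow> (partial i w has_derivative frechet_derivative (partial i w) (at x)) (at x)"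
  using C2 unfolding C2_on_def by (simp_all add: frechet_derivative_works)

lemma continuous_on_potential: "continuous_on \<Omega> V"
  using continuous_potential closure_subset by (rule continuous_on_subset)

lemma continuous_on_w: "continuous_on \<Omega> w"
  using continuous_closure closure_subset by (rule continuous_on_subset)

lemma continuous_on_partial_w: "continuous_on \<Omega> (partial i w)"
  and continuous_on_partial_partial_w: "continuous_on \<Omega> (partial j (partial i w))"
  and continuous_on_laplacian_w: "continuous_on \<Omega> (laplacian w)"
  using C2 unfolding C2_on_def laplacian_def[abs_def] by (auto intro!: continuous_intros)

lemma continuous_on_ramp_w:
  assumes "e > 0"
  shows "continuous_on \<Omega> (\<lambda>x. ramp e (w x))"
    and "continuous_on \<Omega> (\<lambda>x. ramp_slope e (w x))"
    and "continuous_on \<Omega> (\<lambda>x. ramp_weight e (w x))"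
  using assms continuous_on_w
  by (auto intro: continuous_on_compose2[OF continuous_on_ramp] continuous_on_compose2[OF continuous_on_ramp_slope]
      continuous_on_compose2[OF continuous_on_ramp_weight])

definition ramp_test :: "real \<Rightarrow> real^'n \<Rightarrow> real" where
  "ramp_test e x = (if x \<in> \<Omega> then ramp e (w x) else 0)"

lemma has_derivative_ramp_test:
  assumes "e > 0"
  shows "(ramp_test e has_derivative
      (\<lambda>h. if x \<in> \<Omega> then ramp_slope e (w x) * frechet_derivative w (at x) h else 0)) (at x)"
proof -
  have vanish: "ramp e (w y) = 0" if "y \<in> \<Omega>" "w y < e" for y
    using that by (simp add: ramp_eq_0)
  show ?thesis
  proof (cases "x \<in> \<Omega>")
    case True
    have "((\<lambda>y. ramp e (w y)) has_derivative (\<lambda>h. ramp_slope e (w x) * frechet_derivative w (at x) h)) (at x)"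
      using has_derivative_compose[OF has_derivative_w[OF True] ramp_has_real_derivative[OF assms,
            unfolded has_field_derivative_def]] .
    from has_derivative_extend_by_zero(1)[OF assms vanish True this]
    show ?thesis using True by (simp add: ramp_test_def[abs_def])
  next
    case False
    from has_derivative_extend_by_zero(2)[OF assms vanish False]
    show ?thesis using False by (simp add: ramp_test_def[abs_def])
  qed
qed

lemma partial_ramp_test:
  "e > 0 \<Longrightarrow> partial i (ramp_test e) x = (if x \<in> \<Omega> then ramp_slope e (w x) * partial i w x else 0)"
  using partial_eq_of_has_derivative[OF has_derivative_ramp_test] by (simp add: partial_def)

lemma test_fun_ramp_test:
  assumes "e > 0" shows "test_fun \<Omega> (ramp_test e)"
  unfolding test_fun_def
proof (intro conjI allI)
  show "ramp_test e differentiable (at x)" for x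
    using has_derivative_ramp_test[OF assms] by (rule differentiableI)
  show "continuous_on UNIV (partial i (ramp_test e))" for i
  proof -
    have "continuous_on UNIV (\<lambda>x. if x \<in> \<Omega> then ramp_slope e (w x) * partial i w x else 0)"
    proof (rule continuous_on_UNIV_extend_by_zero[OF assms])
      show "continuous_on \<Omega> (\<lambda>x. ramp_slope e (w x) * partial i w x)"
        by (intro continuous_on_mult continuous_on_partial_w continuous_on_ramp_w[OF assms])
    qed (simp add: ramp_slope_eq_0)
    then show ?thesis
      by (simp add: partial_ramp_test[OF assms] fun_eq_iff)
  qed
  have "{x. ramp_test e x \<noteq> 0} \<subseteq> superlevel e"
  proof
    fix x assume "x \<in> {x. ramp_test e x \<noteq> 0}"
    then have "x \<in> \<Omega>" "\<not> w x \<le> e"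
      by (auto simp: ramp_test_def ramp_eq_0 split: if_splits)
    then show "x \<in> superlevel e"
      by (meson less_if_notin_superlevel less_imp_le)
  qed
  then have "closure {x. ramp_test e x \<noteq> 0} \<subseteq> superlevel e"
    using compact_superlevel by (intro closure_minimal compact_imp_closed)
  then show "compact (closure {x. ramp_test e x \<noteq> 0})" "closure {x. ramp_test e x \<noteq> 0} \<subseteq> \<Omega>"
    using compact_superlevel[of e] superlevel_subset[OF assms]
    by (meson bounded_subset closed_closure compact_eq_bounded_closed compact_imp_bounded, blast)
qed

text \<open>The integrand is \<open>\<partial>\<^sub>i (ramp_weight e (w) \<partial>\<^sub>i w)\<close>.\<close>

lemma integral_ramp_flux_divergence:
  assumes "e > 0"
  shows "integral \<Omega> (\<lambda>x. ramp_weight e (w x) * partial i (partial i w) x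
      + (ramp_slope e (w x) * partial i w x)^2) = 0"
proof -
  define flux where "flux x = (if x \<in> \<Omega> then ramp_weight e (w x) * partial i w x else 0)" for x
  define flux' where "flux' x h = (if x \<in> \<Omega>
      then ramp_weight e (w x) * frechet_derivative (partial i w) (at x) h
        + (ramp_slope e (w x))^2 * frechet_derivative w (at x) h * partial i w x
      else 0)" for x h
  define dens where "dens x = ramp_weight e (w x) * partial i (partial i w) x
      + (ramp_slope e (w x) * partial i w x)^2" for x
  have vanish: "ramp_weight e (w y) * partial i w y = 0" "dens y = 0" if "y \<in> \<Omega>" "w y < e" for y
    using that by (simp_all add: dens_def ramp_weight_eq_0 ramp_slope_eq_0)
  have flux_deriv: "(flux has_derivative flux' x) (at x)" for x
  proof (cases "x \<in> \<Omega>")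
    case True
    have "((\<lambda>y. ramp_weight e (w y)) has_derivative
        (\<lambda>h. (ramp_slope e (w x))^2 * frechet_derivative w (at x) h)) (at x)"
      using has_derivative_compose[OF has_derivative_w[OF True]
          ramp_weight_has_real_derivative[OF assms, unfolded has_field_derivative_def]] .
    from has_derivative_mult[OF this has_derivative_partial_w[OF True]]
    have "((\<lambda>y. ramp_weight e (w y) * partial i w y) has_derivative flux' x) (at x)"
      using True by (simp add: flux'_def[abs_def] algebra_simps)
    from has_derivative_extend_by_zero(1)[OF assms vanish(1) True this]
    show ?thesis by (simp add: flux_def[abs_def])
  next
    case False
    from has_derivative_extend_by_zero(2)[OF assms vanish(1) False]
    show ?thesis using False by (simp add: flux_def[abs_def] flux'_def[abs_def])
  qed
  have flux'_axis: "flux' x (axis i 1) = (if x \<in> \<Omega> then dens x else 0)" for x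
    by (simp add: flux'_def dens_def partial_def power2_eq_square mult_ac)
  have "continuous_on \<Omega> dens"
    unfolding dens_def
    by (intro continuous_intros continuous_on_partial_w continuous_on_partial_partial_w
        continuous_on_ramp_w[OF assms])
  then have flux'_cont: "continuous_on UNIV (\<lambda>x. flux' x (axis i 1))"
    unfolding flux'_axis by (rule continuous_on_UNIV_extend_by_zero[OF assms _ vanish(2)])
  have "flux x = 0" if "x \<notin> superlevel e" for x
    using that vanish(1) less_if_notin_superlevel by (simp add: flux_def)
  then have "integral UNIV (\<lambda>x. flux' x (axis i 1)) = 0"
    by (rule integral_directional_derivative_eq_0[OF flux_deriv flux'_cont compact_superlevel])
  then show ?thesis
    by (simp add: flux'_axis integral_restrict_UNIV dens_def)
qed

lemma integral_gradient_ramp_test: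
  assumes "e > 0"
  shows "integral \<Omega> (\<lambda>x. \<Sum>i\<in>UNIV. (partial i (ramp_test e) x)^2)
    = integral \<Omega> (\<lambda>x. ramp_weight e (w x) * - laplacian w x)"
proof -
  define A where "A i x = ramp_weight e (w x) * partial i (partial i w) x" for i x
  define B where "B i x = (ramp_slope e (w x) * partial i w x)^2" for i x
  have "A i integrable_on \<Omega>" "B i integrable_on \<Omega>" for i
    unfolding A_def B_def using assms
    by (auto intro!: integrable_on_domain_if_vanishes_below[OF assms] continuous_intros
        continuous_on_partial_w continuous_on_partial_partial_w continuous_on_ramp_w
        simp: ramp_weight_eq_0 ramp_slope_eq_0)
  then have AB: "integral \<Omega> (B i) = - integral \<Omega> (A i)" for i
    using integral_ramp_flux_divergence[OF assms, of i] integral_add[of "A i" \<Omega> "B i"]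
    by (simp add: A_def B_def)
  have "integral \<Omega> (\<lambda>x. \<Sum>i\<in>UNIV. (partial i (ramp_test e) x)^2) = integral \<Omega> (\<lambda>x. \<Sum>i\<in>UNIV. B i x)"
    by (intro integral_cong) (simp add: partial_ramp_test[OF assms] B_def)
  also have "\<dots> = (\<Sum>i\<in>UNIV. integral \<Omega> (B i))"
    using \<open>\<And>i. B i integrable_on \<Omega>\<close> by (simp add: integral_sum)
  also have "\<dots> = - (\<Sum>i\<in>UNIV. integral \<Omega> (A i))"
    by (simp add: AB sum_negf)
  also have "\<dots> = - integral \<Omega> (\<lambda>x. \<Sum>i\<in>UNIV. A i x)"
    using \<open>\<And>i. A i integrable_on \<Omega>\<close> by (simp add: integral_sum)
  also have "\<dots> = integral \<Omega> (\<lambda>x. ramp_weight e (w x) * - laplacian w x)"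
    by (simp add: A_def laplacian_def sum_distrib_left)
  finally show ?thesis .
qed

lemma bounded_on_closure:
  fixes f :: "real^'n \<Rightarrow> real"
  assumes "continuous_on (closure \<Omega>) f"
  obtains C where "C \<ge> 0" "\<And>x. x \<in> closure \<Omega> \<Longrightarrow> \<bar>f x\<bar> \<le> C"
proof -
  have "bounded (f ` closure \<Omega>)"
    using bounded_domain assms by (intro compact_imp_bounded compact_continuous_image) auto
  then obtain C where "C > 0" "\<And>x. x \<in> closure \<Omega> \<Longrightarrow> \<bar>f x\<bar> \<le> C"
    unfolding bounded_pos by auto
  then show ?thesis using that[of C] by simp
qed

lemma ramp_energy_le:
  assumes e: "0 < e" "e \<le> 1" and "x \<in> \<Omega>"
    and C: "\<And>x. x \<in> closure \<Omega> \<Longrightarrow> \<bar>V x\<bar> \<le> C" and M: "\<And>x. x \<in> closure \<Omega> \<Longrightarrow> \<bar>w x\<bar> \<le> M"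
  shows "ramp_weight e (w x) * - laplacian w x - V x * (ramp e (w x))^2 \<le> C * (1 + 2 * M) * e"
proof -
  define defect where "defect = w x * ramp_weight e (w x) - (ramp e (w x))^2"
  have x: "x \<in> closure \<Omega>" using \<open>x \<in> \<Omega>\<close> closure_subset by blast
  have "ramp_weight e (w x) * - laplacian w x - V x * (ramp e (w x))^2 \<le> V x * defect"
  proof (cases "w x > 0")
    case True
    have "ramp_weight e (w x) * - laplacian w x \<le> ramp_weight e (w x) * (V x * w x)"
      using subsolution[OF \<open>x \<in> \<Omega>\<close> True] ramp_weight_nonneg[OF e(1)] by (rule mult_left_mono)
    then show ?thesis by (simp add: defect_def algebra_simps)
  qed (use e(1) in \<open>simp add: defect_def ramp_eq_0 ramp_weight_eq_0\<close>)
  also have "\<dots> \<le> \<bar>V x\<bar> * defect"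
    using ramp_weight_defect_bounds(1)[OF e(1)] by (simp add: defect_def mult_right_mono)
  also have "\<dots> \<le> C * ((1 + 2 * M) * e)"
  proof (rule mult_mono)
    have "e * (e + 2 * \<bar>w x\<bar>) \<le> e * (1 + 2 * M)"
      using M[OF x] e by (intro mult_left_mono) auto
    then show "defect \<le> (1 + 2 * M) * e"
      using ramp_weight_defect_bounds(2)[OF e(1), of "w x"] by (simp add: defect_def mult.commute)
  qed (use C[OF x] ramp_weight_defect_bounds(1)[OF e(1)] in \<open>auto simp: defect_def\<close>)
  finally show ?thesis by (simp add: mult_ac)
qed

lemma integrable_on_ramp_energy:
  assumes "e > 0"
  shows "(\<lambda>x. ramp_weight e (w x) * - laplacian w x) integrable_on \<Omega>"
    and "(\<lambda>x. V x * (ramp e (w x))^2) integrable_on \<Omega>"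
  by (rule integrable_on_domain_if_vanishes_below[OF assms];
      auto intro!: continuous_intros continuous_on_laplacian_w continuous_on_potential
        continuous_on_ramp_w[OF assms] simp: ramp_eq_0 ramp_weight_eq_0)+

lemma rayleigh_numerator_ramp_test_le:
  obtains B where "B \<ge> 0" "\<And>e. 0 < e \<Longrightarrow> e \<le> 1 \<Longrightarrow>
    integral \<Omega> (\<lambda>x. \<Sum>i\<in>UNIV. (partial i (ramp_test e) x)^2)
      - integral \<Omega> (\<lambda>x. V x * (ramp_test e x)^2) \<le> B * e"
proof -
  obtain C where C: "C \<ge> 0" "\<And>x. x \<in> closure \<Omega> \<Longrightarrow> \<bar>V x\<bar> \<le> C"
    using bounded_on_closure[OF continuous_potential] by blast
  obtain M where M: "M \<ge> 0" "\<And>x. x \<in> closure \<Omega> \<Longrightarrow> \<bar>w x\<bar> \<le> M"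
    using bounded_on_closure[OF continuous_closure] by blast
  have \<Omega>: "\<Omega> \<in> lmeasurable"
    using bounded_domain open_domain by (rule lmeasurable_open)
  show thesis
  proof (rule that[of "C * (1 + 2 * M) * measure lebesgue \<Omega>"])
    show "C * (1 + 2 * M) * measure lebesgue \<Omega> \<ge> 0"
      using C(1) M(1) by simp
    fix e :: real assume e: "0 < e" "e \<le> 1"
    note integrable = integrable_on_ramp_energy[OF e(1)]
    have "integral \<Omega> (\<lambda>x. \<Sum>i\<in>UNIV. (partial i (ramp_test e) x)^2)
        - integral \<Omega> (\<lambda>x. V x * (ramp_test e x)^2)
      = integral \<Omega> (\<lambda>x. ramp_weight e (w x) * - laplacian w x)
        - integral \<Omega> (\<lambda>x. V x * (ramp e (w x))^2)"
      using integral_gradient_ramp_test[OF e(1)] by (simp add: ramp_test_def cong: integral_cong)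
    also have "\<dots> = integral \<Omega> (\<lambda>x. ramp_weight e (w x) * - laplacian w x - V x * (ramp e (w x))^2)"
      using integrable by (rule integral_diff[symmetric])
    also have "\<dots> \<le> integral \<Omega> (\<lambda>_. C * (1 + 2 * M) * e)"
      using integrable_diff[OF integrable] integrable_on_const[OF \<Omega>] ramp_energy_le[OF e _ C(2) M(2)]
      by (rule integral_le)
    also have "\<dots> = C * (1 + 2 * M) * e * integral \<Omega> (\<lambda>_. 1)"
      using integral_mult[OF integrable_on_const[OF \<Omega>], of "C * (1 + 2 * M) * e" 1]
      unfolding mult_1_right by (rule sym)
    also have "\<dots> = C * (1 + 2 * M) * measure lebesgue \<Omega> * e"
      by (simp add: lmeasure_integral[OF \<Omega>])
    finally show "integral \<Omega> (\<lambda>x. \<Sum>i\<in>UNIV. (partial i (ramp_test e) x)^2)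
        - integral \<Omega> (\<lambda>x. V x * (ramp_test e x)^2) \<le> C * (1 + 2 * M) * measure lebesgue \<Omega> * e" .
  qed
qed

lemma integral_ramp_test_sq_ge:
  assumes "x0 \<in> \<Omega>" "w x0 > 0"
  obtains m e0 where "m > 0" "e0 > 0"
    "\<And>e. 0 < e \<Longrightarrow> e \<le> e0 \<Longrightarrow> m \<le> integral \<Omega> (\<lambda>x. (ramp_test e x)^2)"
proof -
  define e0 where "e0 = w x0 / 4"
  have e0: "e0 > 0" "2 * e0 > 0" "w x0 - 2 * e0 > 0"
    using assms(2) by (simp_all add: e0_def)
  have q: "continuous_on \<Omega> (\<lambda>x. (max 0 (w x - 2 * e0))^2)"
    by (intro continuous_intros continuous_on_w)
  have "integral \<Omega> (\<lambda>x. (max 0 (w x - 2 * e0))^2) > 0"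
    using e0 assms(1) by (intro integral_pos_on_domain_if_vanishes_below[OF e0(2) q]) auto
  then show thesis
  proof (rule that[OF _ e0(1)])
    fix e assume e: "0 < e" "e \<le> e0"
    have "integral \<Omega> (\<lambda>x. (max 0 (w x - 2 * e0))^2) \<le> integral \<Omega> (\<lambda>x. (ramp e (w x))^2)"
    proof (rule integral_le)
      show "(\<lambda>x. (max 0 (w x - 2 * e0))^2) integrable_on \<Omega>"
        by (rule integrable_on_domain_if_vanishes_below[OF e0(2) q]) simp
      show "(\<lambda>x. (ramp e (w x))^2) integrable_on \<Omega>"
        by (rule integrable_on_domain_if_vanishes_below[OF e(1)])
          (auto intro!: continuous_intros continuous_on_ramp_w[OF e(1)] simp: ramp_eq_0)
      have "max 0 (t - 2 * e0) \<le> ramp e t" for t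
        using ramp_ge[OF e(1), of t] e(2) by linarith
      then show "(max 0 (w x - 2 * e0))^2 \<le> (ramp e (w x))^2" for x
        by (simp add: power_mono)
    qed
    also have "\<dots> = integral \<Omega> (\<lambda>x. (ramp_test e x)^2)"
      by (rule integral_cong) (simp add: ramp_test_def)
    finally show "integral \<Omega> (\<lambda>x. (max 0 (w x - 2 * e0))^2) \<le> integral \<Omega> (\<lambda>x. (ramp_test e x)^2)" .
  qed
qed

lemma eventually_rayleigh_ramp_test_le:
  assumes "x0 \<in> \<Omega>" "w x0 > 0"
  obtains c where "\<forall>\<^sub>F e in at_right 0. ramp_test e x0 \<noteq> 0 \<and> rayleigh \<Omega> V (ramp_test e) \<le> c * e"
proof -
  obtain m e1 where m: "m > 0" "e1 > 0"
    and denominator: "\<And>e. 0 < e \<Longrightarrow> e \<le> e1 \<Longrightarrow> m \<le> integral \<Omega> (\<lambda>x. (ramp_test e x)^2)"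
    using integral_ramp_test_sq_ge[OF assms] by blast
  obtain B where B: "B \<ge> 0" and numerator: "\<And>e. 0 < e \<Longrightarrow> e \<le> 1 \<Longrightarrow>
      integral \<Omega> (\<lambda>x. \<Sum>i\<in>UNIV. (partial i (ramp_test e) x)^2)
        - integral \<Omega> (\<lambda>x. V x * (ramp_test e x)^2) \<le> B * e"
    using rayleigh_numerator_ramp_test_le by blast
  have "min e1 (min 1 (w x0 / 4)) > 0"
    using m(2) assms(2) by simp
  with eventually_at_right_real
  have "\<forall>\<^sub>F e in at_right 0. e \<in> {0<..<min e1 (min 1 (w x0 / 4))}" .
  then have "\<forall>\<^sub>F e in at_right 0. ramp_test e x0 \<noteq> 0 \<and> rayleigh \<Omega> V (ramp_test e) \<le> B / m * e"
  proof (rule eventually_mono)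
    fix e assume "e \<in> {0<..<min e1 (min 1 (w x0 / 4))}"
    then have e: "0 < e" "e \<le> 1" "e \<le> e1" "2 * e < w x0" by simp_all
    have "0 < w x0 - 2 * e" using e by simp
    also have "\<dots> \<le> ramp e (w x0)" using ramp_ge[OF e(1)] by simp
    finally have "ramp_test e x0 \<noteq> 0" using assms(1) by (simp add: ramp_test_def)
    define D where "D = integral \<Omega> (\<lambda>x. (ramp_test e x)^2)"
    have D: "m \<le> D" using denominator[OF e(1,3)] by (simp add: D_def)
    have "rayleigh \<Omega> V (ramp_test e)
        = (integral \<Omega> (\<lambda>x. \<Sum>i\<in>UNIV. (partial i (ramp_test e) x)^2)
          - integral \<Omega> (\<lambda>x. V x * (ramp_test e x)^2)) / D"
      by (simp add: rayleigh_def D_def)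
    also have "\<dots> \<le> B * e / D"
      by (rule divide_right_mono[OF numerator[OF e(1,2)]]) (use D m(1) in linarith)
    also have "\<dots> \<le> B * e / m"
    proof (rule divide_left_mono[OF D])
      show "0 \<le> B * e" using B e(1) by simp
      show "0 < D * m" using D m(1) by simp
    qed
    finally show "ramp_test e x0 \<noteq> 0 \<and> rayleigh \<Omega> V (ramp_test e) \<le> B / m * e"
      using \<open>ramp_test e x0 \<noteq> 0\<close> by simp
  qed
  then show thesis by (rule that)
qed

theorem nonpos_if_stable:
  assumes "first_dirichlet_eigenvalue \<Omega> V > 0" "x \<in> \<Omega>"
  shows "w x \<le> 0"
proof (rule ccontr)
  assume "\<not> w x \<le> 0"
  then have "w x > 0" by simp
  obtain c where c: "\<forall>\<^sub>F e in at_right 0. ramp_test e x \<noteq> 0 \<and> rayleigh \<Omega> V (ramp_test e) \<le> c * e"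
    using eventually_rayleigh_ramp_test_le[OF \<open>x \<in> \<Omega>\<close> \<open>w x > 0\<close>] by blast
  obtain C where C: "\<And>x. x \<in> closure \<Omega> \<Longrightarrow> \<bar>V x\<bar> \<le> C"
    using bounded_on_closure[OF continuous_potential] by blast
  have "V y \<le> C" if "y \<in> \<Omega>" for y
    using C[of y] that closure_subset by (meson abs_le_D1 subsetD)
  then have eigenvalue_le: "first_dirichlet_eigenvalue \<Omega> V \<le> rayleigh \<Omega> V (ramp_test e)"
    if "e > 0" "ramp_test e x \<noteq> 0" for e
    by (rule first_dirichlet_eigenvalue_le_rayleigh[OF test_fun_ramp_test[OF that(1)] that(2)
          open_domain continuous_on_potential])
  from c eventually_at_right_less[of "0::real"]
  have "\<forall>\<^sub>F e in at_right 0. first_dirichlet_eigenvalue \<Omega> V \<le> c * e"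
    by eventually_elim (use eigenvalue_le in \<open>blast intro: order_trans\<close>)
  moreover have "((\<lambda>e. c * e) \<longlongrightarrow> c * 0) (at_right 0)"
    by (intro tendsto_mult tendsto_const tendsto_ident_at)
  ultimately have "first_dirichlet_eigenvalue \<Omega> V \<le> c * 0"
    by (intro tendsto_lowerbound[OF _ _ trivial_limit_at_right_real])
  with assms(1) show False by simp
qed

end

section \<open>Symmetry of stable solutions\<close>

lemma dirichlet_subsolution_reflection_difference:
  fixes \<Omega> :: "(real^'n::finite) set" and u :: "real^'n \<Rightarrow> real"
  assumes \<Omega>: "open \<Omega>" "bounded \<Omega>" "reflect k ` \<Omega> \<subseteq> \<Omega>"
    and f: "\<And>t. (f has_real_derivative f' t) (at t)" "continuous_on UNIV f'" "convex_on UNIV f"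
    and u: "C2_on \<Omega> u" "continuous_on (closure \<Omega>) u"
    and pde: "\<And>x. x \<in> \<Omega> \<Longrightarrow> - laplacian u x = f (u x)" "\<And>x. x \<in> frontier \<Omega> \<Longrightarrow> u x = 0"
  shows "dirichlet_subsolution \<Omega> (\<lambda>x. f' (u x)) (\<lambda>x. u x - u (reflect k x))"
proof
  show "open \<Omega>" "bounded \<Omega>" by (fact \<Omega>)+
  show "continuous_on (closure \<Omega>) (\<lambda>x. f' (u x))"
    using f(2) u(2) by (rule continuous_on_compose2) simp
  show "C2_on \<Omega> (\<lambda>x. u x - u (reflect k x))"
    using \<Omega>(1) u(1) C2_on_reflect_compose[OF \<Omega>(1,3) u(1)] by (rule C2_on_diff)
  have "continuous_on (closure \<Omega>) (\<lambda>x. u (reflect k x))"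
    by (rule continuous_on_compose2[OF u(2) linear_continuous_on[OF bounded_linear_reflect]
          reflect_closure[OF \<Omega>(3)]])
  with u(2) show "continuous_on (closure \<Omega>) (\<lambda>x. u x - u (reflect k x))"
    by (rule continuous_on_diff)
  show "u x - u (reflect k x) = 0" if "x \<in> frontier \<Omega>" for x
    using that reflect_frontier[OF \<Omega>(1,3)] pde(2) by auto
  show "- laplacian (\<lambda>x. u x - u (reflect k x)) x \<le> f' (u x) * (u x - u (reflect k x))"
    if "x \<in> \<Omega>" for x
  proof -
    have "reflect k x \<in> \<Omega>" using \<Omega>(3) that by blast
    then have "- laplacian (\<lambda>x. u x - u (reflect k x)) x = f (u x) - f (u (reflect k x))"
      using laplacian_diff[OF \<Omega>(1) u(1) C2_on_reflect_compose[OF \<Omega>(1,3) u(1)] that]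
        laplacian_reflect_compose[OF \<Omega>(1,3) u(1) that] pde(1)[OF that] pde(1)[of "reflect k x"]
      by simp
    moreover have "f (u (reflect k x)) - f (u x) \<ge> f' (u x) * (u (reflect k x) - u x)"
      using f(1,3) by (intro convex_on_imp_above_tangent) auto
    ultimately show ?thesis by (simp add: algebra_simps)
  qed
qed

theorem lemma4p1:
  fixes \<Omega> :: "(real^'n::finite) set" and k :: 'n
    and f f' :: "real \<Rightarrow> real" and u :: "real^'n \<Rightarrow> real"
  assumes "CARD('n) \<ge> 3"
    and "open \<Omega>" and "connected \<Omega>" and "\<Omega> \<noteq> {}" and "bounded \<Omega>"
    and "simple_rot_sym k \<Omega>"
    and "\<And>t. (f has_real_derivative f' t) (at t)" and "continuous_on UNIV f'"
    and "convex_on UNIV f"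
    and "C2_on \<Omega> u" and "continuous_on (closure \<Omega>) u"
    and "\<And>x. x \<in> \<Omega> \<Longrightarrow> - laplacian u x = f (u x)"
    and "\<And>x. x \<in> frontier \<Omega> \<Longrightarrow> u x = 0"
    and "stable \<Omega> f' u"
  shows "\<forall>x\<in>\<Omega>. u (reflect k x) = u x"
proof
  fix x assume x: "x \<in> \<Omega>"
  have sym: "reflect k ` \<Omega> \<subseteq> \<Omega>"
    using assms(6) by (auto simp: simple_rot_sym_def)
  interpret dirichlet_subsolution \<Omega> "\<lambda>x. f' (u x)" "\<lambda>x. u x - u (reflect k x)"
    using assms(2,5) sym assms(7-13) by (rule dirichlet_subsolution_reflection_difference)
  have "reflect k x \<in> \<Omega>"
    using sym x by blast
  then show "u (reflect k x) = u x"
    using nonpos_if_stable[OF _ x] nonpos_if_stable[OF _ \<open>reflect k x \<in> \<Omega>\<close>] assms(14)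
    by (simp add: stable_def)
qed

end
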